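(* Let $(X,d^X)$ be a graph with bounded geometry that is roughly isometric to a Cayley graph $(G,S,d^S)$ of a group of polynomial volume growth, via a rough isometry $\phi:X\to G$. Then there exist a group $G'$ with a finite symmetric generating set $S'$, of polynomial volume growth with the same homogeneous dimension as $G$, and an injective rough isometry $\phi':X\to (G',d^{S'})$.
   Context: Graphs are connected, locally finite, without self-loops or multiple edges; $d^X$ is the path-length metric. Bounded geometry: $\deg x\leq\Delta$ for all vertices $x$ and some $\Delta>0$. For a group $G$ with finite symmetric generating set $S$, the Cayley graph has $x\sim y$ iff $x=ys$ for some $s\in S$, with word metric $d^S$. $G$ has polynomial volume growth if $|\{x:d^S(e,x)\leq n\}|\leq Cn^A$ for some $C,A>0$ and all $n\geq1$; the homogeneous dimension is the integer $D$ with $C_1n^D\leq|\{x:d^S(e,x)\leq n\}|\leq C_2n^D$ for all $n\geq 1$. A map $\phi:X\to Y$ of metric spaces is an $(a,b)$-rough isometry ($a\geq1,b\geq0$) if $a^{-1}d^X(x,y)-b\leq d^Y(\phi(x),\phi(y))\leq a\,d^X(x,y)+b$ for all $x,y\in X$ and $d^Y(z,\phi(X))\leq b$ for all $z\in Y$; a rough isometry is an $(a,b)$-rough isometry for some $a,b$. *)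

theory Defs
  imports Complex_Main "HOL-Algebra.Generated_Groups"
begin

definition is_walk :: "('a \<Rightarrow> 'a \<Rightarrow> bool) \<Rightarrow> 'a list \<Rightarrow> bool" where
  "is_walk E p \<longleftrightarrow> p \<noteq> [] \<and> (\<forall>i. Suc i < length p \<longrightarrow> E (p ! i) (p ! Suc i))"

definition graph_dist :: "'a set \<Rightarrow> ('a \<Rightarrow> 'a \<Rightarrow> bool) \<Rightarrow> 'a \<Rightarrow> 'a \<Rightarrow> nat" where
  "graph_dist V E x y = (LEAST n. \<exists>p. is_walk E p \<and> set p \<subseteq> V \<and> hd p = x \<and> last p = y
                                      \<and> length p = Suc n)"

definition conn_graph :: "'a set \<Rightarrow> ('a \<Rightarrow> 'a \<Rightarrow> bool) \<Rightarrow> bool" where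
  "conn_graph V E \<longleftrightarrow>
     (\<forall>x y. E x y \<longrightarrow> x \<in> V \<and> y \<in> V) \<and>
     (\<forall>x y. E x y \<longrightarrow> E y x) \<and>
     (\<forall>x. \<not> E x x) \<and>
     (\<forall>x\<in>V. finite {y. E x y}) \<and>
     (\<forall>x\<in>V. \<forall>y\<in>V. \<exists>p. is_walk E p \<and> set p \<subseteq> V \<and> hd p = x \<and> last p = y)"

definition bounded_geometry :: "'a set \<Rightarrow> ('a \<Rightarrow> 'a \<Rightarrow> bool) \<Rightarrow> bool" where
  "bounded_geometry V E \<longleftrightarrow> (\<exists>\<Delta>::nat. \<Delta> > 0 \<and> (\<forall>x\<in>V. card {y. E x y} \<le> \<Delta>))"

definition fin_sym_gen_set :: "('g, 'm) monoid_scheme \<Rightarrow> 'g set \<Rightarrow> bool" where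
  "fin_sym_gen_set G S \<longleftrightarrow> group G \<and> finite S \<and> S \<subseteq> carrier G \<and>
     (\<forall>s\<in>S. inv\<^bsub>G\<^esub> s \<in> S) \<and> generate G S = carrier G"

text \<open>Word metric: least n such that x = y s_1 ... s_n with s_i in S
  (= path metric of the Cayley graph, x ~ y iff x = y s).\<close>
definition word_dist :: "('g, 'm) monoid_scheme \<Rightarrow> 'g set \<Rightarrow> 'g \<Rightarrow> 'g \<Rightarrow> nat" where
  "word_dist G S x y = (LEAST n. \<exists>ss. length ss = n \<and> set ss \<subseteq> S \<and>
       x = y \<otimes>\<^bsub>G\<^esub> foldr (\<lambda>s a. s \<otimes>\<^bsub>G\<^esub> a) ss \<one>\<^bsub>G\<^esub>)"

definition word_ball :: "('g, 'm) monoid_scheme \<Rightarrow> 'g set \<Rightarrow> nat \<Rightarrow> 'g set" where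
  "word_ball G S n = {x \<in> carrier G. word_dist G S \<one>\<^bsub>G\<^esub> x \<le> n}"

definition poly_growth :: "('g, 'm) monoid_scheme \<Rightarrow> 'g set \<Rightarrow> bool" where
  "poly_growth G S \<longleftrightarrow> (\<exists>C A::real. C > 0 \<and> A > 0 \<and>
     (\<forall>n::nat. n \<ge> 1 \<longrightarrow> real (card (word_ball G S n)) \<le> C * real n powr A))"

definition homogeneous_dim :: "('g, 'm) monoid_scheme \<Rightarrow> 'g set \<Rightarrow> nat \<Rightarrow> bool" where
  "homogeneous_dim G S D \<longleftrightarrow> (\<exists>C1 C2::real. C1 > 0 \<and> C2 > 0 \<and>
     (\<forall>n::nat. n \<ge> 1 \<longrightarrow> C1 * real n ^ D \<le> real (card (word_ball G S n)) \<and>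
                          real (card (word_ball G S n)) \<le> C2 * real n ^ D))"

definition rough_isometry ::
  "'a set \<Rightarrow> ('a \<Rightarrow> 'a \<Rightarrow> real) \<Rightarrow> 'b set \<Rightarrow> ('b \<Rightarrow> 'b \<Rightarrow> real) \<Rightarrow> ('a \<Rightarrow> 'b) \<Rightarrow> real \<Rightarrow> real \<Rightarrow> bool" where
  "rough_isometry X dX Y dY \<phi> a b \<longleftrightarrow> a \<ge> 1 \<and> b \<ge> 0 \<and> \<phi> ` X \<subseteq> Y \<and>
     (\<forall>x\<in>X. \<forall>y\<in>X. dX x y / a - b \<le> dY (\<phi> x) (\<phi> y) \<and> dY (\<phi> x) (\<phi> y) \<le> a * dX x y + b) \<and>
     (\<forall>z\<in>Y. \<exists>x\<in>X. dY z (\<phi> x) \<le> b)"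

definition is_rough_isometry ::
  "'a set \<Rightarrow> ('a \<Rightarrow> 'a \<Rightarrow> real) \<Rightarrow> 'b set \<Rightarrow> ('b \<Rightarrow> 'b \<Rightarrow> real) \<Rightarrow> ('a \<Rightarrow> 'b) \<Rightarrow> bool" where
  "is_rough_isometry X dX Y dY \<phi> \<longleftrightarrow> (\<exists>a b. rough_isometry X dX Y dY \<phi> a b)"

end

theory Submission
  imports Defs "HOL-Library.Countable_Set" "HOL-Algebra.Elementary_Groups"
begin

text \<open>Two points of one fibre of \<open>\<phi>\<close> are at graph distance at most \<open>a * b\<close>, so by bounded
  geometry every fibre has at most \<open>N\<close> points. Colour the points of each fibre injectively by
  residues mod \<open>N + 1\<close> and send \<open>x\<close> to \<open>(\<phi> x, colour x)\<close> in \<open>G \<times> \<int>/(N+1)\<close>, generated by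
  \<open>(S \<union> {1}) \<times> \<int>/(N+1)\<close>. Word distances there exceed those of the first coordinates in \<open>G\<close>
  by at most 1, so the new map is an injective rough isometry; and every ball of radius \<open>n \<ge> 1\<close> is
  a ball of \<open>G\<close> times \<open>\<int>/(N+1)\<close>, so growth and homogeneous dimension are unchanged. The
  resulting countable group is finally copied onto a subset of \<open>nat\<close>.\<close>

definition word_prod :: "('g, 'm) monoid_scheme \<Rightarrow> 'g list \<Rightarrow> 'g" where
  "word_prod G ss = foldr (\<lambda>s a. s \<otimes>\<^bsub>G\<^esub> a) ss \<one>\<^bsub>G\<^esub>"

lemma word_prod_Nil [simp]: "word_prod G [] = \<one>\<^bsub>G\<^esub>"
  and word_prod_Cons [simp]: "word_prod G (s # ss) = s \<otimes>\<^bsub>G\<^esub> word_prod G ss"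
  by (simp_all add: word_prod_def)

lemma word_dist_word_prod:
  "word_dist G S x y = (LEAST n. \<exists>ss. length ss = n \<and> set ss \<subseteq> S \<and> x = y \<otimes>\<^bsub>G\<^esub> word_prod G ss)"
  by (simp add: word_dist_def word_prod_def)

lemma (in monoid) word_prod_closed [intro, simp]: "set ss \<subseteq> carrier G \<Longrightarrow> word_prod G ss \<in> carrier G"
  by (induction ss) auto

lemma (in monoid) word_prod_append:
  "set xs \<subseteq> carrier G \<Longrightarrow> set ys \<subseteq> carrier G \<Longrightarrow> word_prod G (xs @ ys) = word_prod G xs \<otimes> word_prod G ys"
  by (induction xs) (auto simp: m_assoc)

lemma (in monoid) word_prod_filter_one:
  "set ss \<subseteq> carrier G \<Longrightarrow> word_prod G (filter (\<lambda>s. s \<noteq> \<one>) ss) = word_prod G ss"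
  by (induction ss) auto

lemma (in group_hom) hom_word_prod:
  "set ss \<subseteq> carrier G \<Longrightarrow> h (word_prod G ss) = word_prod H (map h ss)"
  by (induction ss) auto

lemma (in group) generate_eq_word_prods:
  assumes "S \<subseteq> carrier G" and "\<forall>s\<in>S. inv s \<in> S"
  shows "generate G S = word_prod G ` lists S"
proof
  show "generate G S \<subseteq> word_prod G ` lists S"
  proof
    fix g assume "g \<in> generate G S"
    then show "g \<in> word_prod G ` lists S"
    proof induction
      case one
      show ?case by (rule image_eqI[of _ _ "[]"]) auto
    next
      case (incl h)
      then show ?case using assms by (intro image_eqI[of _ _ "[h]"]) auto
    next
      case (inv h)
      then show ?case using assms by (intro image_eqI[of _ _ "[inv h]"]) auto
    next
      case (eng h1 h2)
      then obtain s1 s2 where "s1 \<in> lists S" "h1 = word_prod G s1" "s2 \<in> lists S" "h2 = word_prod G s2"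
        by blast
      then show ?case using assms(1) by (intro image_eqI[of _ _ "s1 @ s2"]) (auto simp: word_prod_append subset_iff)
    qed
  qed
next
  show "word_prod G ` lists S \<subseteq> generate G S"
  proof
    fix g assume "g \<in> word_prod G ` lists S"
    then obtain ss where "set ss \<subseteq> S" "g = word_prod G ss" by auto
    then show "g \<in> generate G S"
      by (induction ss arbitrary: g) (auto intro: generate.intros)
  qed
qed

lemma fin_sym_gen_set_carrier:
  assumes "fin_sym_gen_set G S"
  shows "carrier G = word_prod G ` lists S"
  using assms group.generate_eq_word_prods[of G S] unfolding fin_sym_gen_set_def by auto

lemma fin_sym_gen_setI:
  assumes "group G" "finite S" "S \<subseteq> carrier G" "\<forall>s\<in>S. inv\<^bsub>G\<^esub> s \<in> S"
    and "carrier G \<subseteq> word_prod G ` lists S"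
  shows "fin_sym_gen_set G S"
  using assms group.generate_eq_word_prods[of G S] group.generate_incl[of G S]
  unfolding fin_sym_gen_set_def by auto

lemma countable_carrier_if_fin_sym_gen_set:
  assumes "fin_sym_gen_set G S"
  shows "countable (carrier G)"
  using assms fin_sym_gen_set_carrier[OF assms]
  by (auto simp: fin_sym_gen_set_def intro: countable_finite)

lemma word_dist_le:
  "set ss \<subseteq> S \<Longrightarrow> x = y \<otimes>\<^bsub>G\<^esub> word_prod G ss \<Longrightarrow> word_dist G S x y \<le> length ss"
  unfolding word_dist_word_prod by (rule Least_le) blast

lemma word_dist_refl: "monoid G \<Longrightarrow> x \<in> carrier G \<Longrightarrow> word_dist G S x x = 0"
  using word_dist_le[where ss="[]" and S=S and x=x and y=x and G=G] by (simp add: monoid.r_one)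

lemma word_dist_witness:
  assumes "fin_sym_gen_set G S" "x \<in> carrier G" "y \<in> carrier G"
  obtains ss where "length ss = word_dist G S x y" "set ss \<subseteq> S" "x = y \<otimes>\<^bsub>G\<^esub> word_prod G ss"
proof -
  interpret group G using assms(1) by (simp add: fin_sym_gen_set_def)
  obtain ss where "set ss \<subseteq> S" "inv\<^bsub>G\<^esub> y \<otimes>\<^bsub>G\<^esub> x = word_prod G ss"
    using fin_sym_gen_set_carrier[OF assms(1)] assms(2,3) by (metis imageE inv_closed m_closed in_listsD subsetI)
  then have "\<exists>n ss. length ss = n \<and> set ss \<subseteq> S \<and> x = y \<otimes>\<^bsub>G\<^esub> word_prod G ss"
    using assms(2,3) by (metis inv_solve_left' m_closed inv_closed)
  then have "\<exists>ss. length ss = word_dist G S x y \<and> set ss \<subseteq> S \<and> x = y \<otimes>\<^bsub>G\<^esub> word_prod G ss"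
    unfolding word_dist_word_prod by (rule LeastI_ex)
  then show thesis using that by blast
qed

lemma word_dist_hom_le:
  assumes "fin_sym_gen_set G S" "group H" "f \<in> hom G H" "f ` S \<subseteq> insert \<one>\<^bsub>H\<^esub> T"
    and "x \<in> carrier G" "y \<in> carrier G"
  shows "word_dist H T (f x) (f y) \<le> word_dist G S x y"
proof -
  interpret group_hom G H f
    using assms(1-3) by (simp add: group_hom_def group_hom_axioms_def fin_sym_gen_set_def)
  obtain ss where ss: "length ss = word_dist G S x y" "set ss \<subseteq> S" "x = y \<otimes>\<^bsub>G\<^esub> word_prod G ss"
    using word_dist_witness[OF assms(1,5,6)] .
  have "set ss \<subseteq> carrier G" using ss(2) assms(1) by (auto simp: fin_sym_gen_set_def)
  define ts where "ts = filter (\<lambda>t. t \<noteq> \<one>\<^bsub>H\<^esub>) (map f ss)"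
  have "f x = f y \<otimes>\<^bsub>H\<^esub> word_prod H (map f ss)"
    using \<open>set ss \<subseteq> carrier G\<close> ss(3) assms(6) by (simp add: hom_word_prod)
  also have "word_prod H (map f ss) = word_prod H ts"
    using \<open>set ss \<subseteq> carrier G\<close> unfolding ts_def by (intro H.word_prod_filter_one[symmetric]) auto
  finally have "f x = f y \<otimes>\<^bsub>H\<^esub> word_prod H ts" .
  moreover have "set ts \<subseteq> T" using ss(2) assms(4) by (auto simp: ts_def)
  ultimately have "word_dist H T (f x) (f y) \<le> length ts" by (rule word_dist_le[rotated])
  also have "\<dots> \<le> length ss" by (simp add: ts_def)
  finally show ?thesis using ss(1) by simp
qed

lemma fin_sym_gen_set_iso:
  assumes "fin_sym_gen_set G S" "group H" "h \<in> iso G H"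
  shows "fin_sym_gen_set H (h ` S)"
proof -
  have G: "group G" and S: "finite S" "S \<subseteq> carrier G" "\<forall>s\<in>S. inv\<^bsub>G\<^esub> s \<in> S" "generate G S = carrier G"
    using assms(1) by (auto simp: fin_sym_gen_set_def)
  have hom: "h \<in> hom G H" and onto: "h ` carrier G = carrier H"
    using assms(3) unfolding iso_iff by blast+
  interpret group_hom G H h using G assms(2) hom by (simp add: group_hom_def group_hom_axioms_def)
  have "generate H (h ` S) = carrier H"
    using generate_img[OF S(2)] S(4) onto by simp
  moreover have "\<forall>t\<in>h ` S. inv\<^bsub>H\<^esub> t \<in> h ` S" using S(2,3) by force
  ultimately show ?thesis using S(1,2) assms(2) by (auto simp: fin_sym_gen_set_def)
qed

lemma word_dist_iso:
  assumes "fin_sym_gen_set G S" "group H" "h \<in> iso G H" "x \<in> carrier G" "y \<in> carrier G"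
  shows "word_dist H (h ` S) (h x) (h y) = word_dist G S x y"
proof (rule antisym)
  have G: "group G" and S: "S \<subseteq> carrier G" using assms(1) by (auto simp: fin_sym_gen_set_def)
  have hom: "h \<in> hom G H" using assms(3) by (rule iso_imp_homomorphism)
  show "word_dist H (h ` S) (h x) (h y) \<le> word_dist G S x y"
    by (rule word_dist_hom_le[OF assms(1,2) hom _ assms(4,5)]) blast
  define h' where "h' = inv_into (carrier G) h"
  have hom': "h' \<in> hom H G"
    unfolding h'_def using group.iso_set_sym[OF G assms(3)] by (rule iso_imp_homomorphism)
  have inv: "h' (h g) = g" if "g \<in> carrier G" for g
    using assms(3) that unfolding h'_def iso_iff by (simp add: inv_into_f_f)
  have "h' ` h ` S = S" using S inv by (force simp: image_image)
  then have "word_dist G S (h' (h x)) (h' (h y)) \<le> word_dist H (h ` S) (h x) (h y)"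
    using word_dist_hom_le[OF fin_sym_gen_set_iso[OF assms(1-3)] G hom', of "S" "h x" "h y"]
      assms(4,5) hom by (auto simp: hom_def)
  then show "word_dist G S x y \<le> word_dist H (h ` S) (h x) (h y)" using assms(4,5) inv by simp
qed

lemma card_word_ball_iso:
  assumes "fin_sym_gen_set G S" "group H" "h \<in> iso G H"
  shows "card (word_ball H (h ` S) n) = card (word_ball G S n)"
proof -
  have G: "group G" using assms(1) by (simp add: fin_sym_gen_set_def)
  have hom: "h \<in> hom G H" and onto: "h ` carrier G = carrier H" and inj: "inj_on h (carrier G)"
    using assms(3) unfolding iso_iff by blast+
  have "h \<one>\<^bsub>G\<^esub> = \<one>\<^bsub>H\<^esub>" using hom G assms(2) by (rule hom_one)
  moreover have "\<one>\<^bsub>G\<^esub> \<in> carrier G" using G by (simp add: group.is_monoid monoid.one_closed)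
  ultimately have "word_dist H (h ` S) \<one>\<^bsub>H\<^esub> (h g) = word_dist G S \<one>\<^bsub>G\<^esub> g" if "g \<in> carrier G" for g
    using word_dist_iso[OF assms _ that] by metis
  then have "word_ball H (h ` S) n = h ` word_ball G S n"
    unfolding word_ball_def onto[symmetric] by auto
  moreover have "inj_on h (word_ball G S n)"
    using inj by (auto simp: word_ball_def intro: inj_on_subset)
  ultimately show ?thesis by (simp add: card_image)
qed

definition image_monoid :: "('a \<Rightarrow> 'b) \<Rightarrow> ('a, 'm) monoid_scheme \<Rightarrow> 'b monoid" where
  "image_monoid h G = \<lparr>carrier = h ` carrier G,
     mult = \<lambda>x y. h (inv_into (carrier G) h x \<otimes>\<^bsub>G\<^esub> inv_into (carrier G) h y), one = h \<one>\<^bsub>G\<^esub>\<rparr>"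

lemma image_monoid_iso:
  assumes "group G" "inj_on h (carrier G)"
  shows "group (image_monoid h G)" and "h \<in> iso G (image_monoid h G)"
proof -
  have "h (x \<otimes>\<^bsub>G\<^esub> y) = h x \<otimes>\<^bsub>image_monoid h G\<^esub> h y" if "x \<in> carrier G" "y \<in> carrier G" for x y
    using assms(2) that by (simp add: image_monoid_def inv_into_f_f)
  then have hom: "h \<in> hom G (image_monoid h G)"
    by (intro homI) (simp_all add: image_monoid_def)
  then show "h \<in> iso G (image_monoid h G)"
    using assms(2) by (simp add: iso_iff image_monoid_def)
  show "group (image_monoid h G)"
    using group.hom_imp_img_group[OF assms(1) hom] by (simp add: image_monoid_def)
qed

lemma exists_nat_iso_copy:
  assumes "fin_sym_gen_set G S"
  obtains Q :: "nat monoid" and h where "group Q" "h \<in> iso G Q"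
  using image_monoid_iso[of G "to_nat_on (carrier G)"] assms
    countable_carrier_if_fin_sym_gen_set[OF assms] by (auto simp: fin_sym_gen_set_def)

section \<open>Products with a finite group\<close>

lemma word_prod_DirProd:
  "word_prod (G \<times>\<times> H) ss = (word_prod G (map fst ss), word_prod H (map snd ss))"
  by (induction ss) (simp_all add: mult_DirProd')

lemma word_prod_DirProd_lift:
  assumes "monoid H" "k \<in> carrier H"
  shows "word_prod (G \<times>\<times> H) ((t, k) # map (\<lambda>s. (s, \<one>\<^bsub>H\<^esub>)) ts) = (word_prod G (t # ts), k)"
proof -
  have "word_prod H (map (\<lambda>_. \<one>\<^bsub>H\<^esub>) ts) = \<one>\<^bsub>H\<^esub>"
    using assms(1) by (induction ts) simp_all
  then show ?thesis using assms by (simp add: word_prod_DirProd comp_def)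
qed

lemma fin_sym_gen_set_DirProd:
  assumes "fin_sym_gen_set G S" "group H" "finite (carrier H)"
  shows "fin_sym_gen_set (G \<times>\<times> H) (insert \<one>\<^bsub>G\<^esub> S \<times> carrier H)"
proof (rule fin_sym_gen_setI)
  have G: "group G" and S: "finite S" "S \<subseteq> carrier G" "\<forall>s\<in>S. inv\<^bsub>G\<^esub> s \<in> S"
    using assms(1) by (auto simp: fin_sym_gen_set_def)
  interpret G: group G by fact
  interpret H: group H by fact
  show "group (G \<times>\<times> H)" using G assms(2) by (rule DirProd_group)
  show "finite (insert \<one>\<^bsub>G\<^esub> S \<times> carrier H)" using S(1) assms(3) by simp
  show "insert \<one>\<^bsub>G\<^esub> S \<times> carrier H \<subseteq> carrier (G \<times>\<times> H)" using S(2) by auto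
  show "\<forall>s\<in>insert \<one>\<^bsub>G\<^esub> S \<times> carrier H. inv\<^bsub>G \<times>\<times> H\<^esub> s \<in> insert \<one>\<^bsub>G\<^esub> S \<times> carrier H"
    using S(2,3) by (auto simp: subsetD)
  show "carrier (G \<times>\<times> H) \<subseteq> word_prod (G \<times>\<times> H) ` lists (insert \<one>\<^bsub>G\<^esub> S \<times> carrier H)"
  proof (clarsimp)
    fix g k assume g: "g \<in> carrier G" and k: "k \<in> carrier H"
    obtain ss where ss: "ss \<in> lists S" "g = word_prod G ss"
      using g fin_sym_gen_set_carrier[OF assms(1)] by auto
    then have "(g, k) = word_prod (G \<times>\<times> H) ((\<one>\<^bsub>G\<^esub>, k) # map (\<lambda>s. (s, \<one>\<^bsub>H\<^esub>)) ss)"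
      using S(2) k by (subst word_prod_DirProd_lift) (auto intro!: G.l_one[symmetric] G.word_prod_closed)
    moreover have "(\<one>\<^bsub>G\<^esub>, k) # map (\<lambda>s. (s, \<one>\<^bsub>H\<^esub>)) ss \<in> lists (insert \<one>\<^bsub>G\<^esub> S \<times> carrier H)"
      using ss(1) k by auto
    ultimately show "(g, k) \<in> word_prod (G \<times>\<times> H) ` lists (insert \<one>\<^bsub>G\<^esub> S \<times> carrier H)"
      by blast
  qed
qed

lemma word_dist_DirProd_ge:
  assumes "fin_sym_gen_set G S" "group H" "finite (carrier H)"
    and "p \<in> carrier (G \<times>\<times> H)" "q \<in> carrier (G \<times>\<times> H)"
  shows "word_dist G S (fst p) (fst q) \<le> word_dist (G \<times>\<times> H) (insert \<one>\<^bsub>G\<^esub> S \<times> carrier H) p q"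
proof (rule word_dist_hom_le[OF fin_sym_gen_set_DirProd[OF assms(1-3)] _ _ _ assms(4,5)])
  show "group G" using assms(1) by (simp add: fin_sym_gen_set_def)
  show "fst \<in> hom (G \<times>\<times> H) G" by (auto simp: hom_def mult_DirProd')
qed auto

text \<open>The \<open>H\<close>-coordinate is adjusted in the first letter of a shortest word of \<open>G\<close>; only the
  empty word needs an extra letter.\<close>

lemma word_dist_DirProd_le:
  assumes "fin_sym_gen_set G S" "group H"
    and "p \<in> carrier (G \<times>\<times> H)" "q \<in> carrier (G \<times>\<times> H)"
  shows "word_dist (G \<times>\<times> H) (insert \<one>\<^bsub>G\<^esub> S \<times> carrier H) p q \<le> max (word_dist G S (fst p) (fst q)) 1"
proof -
  have G: "group G" and S: "S \<subseteq> carrier G" using assms(1) by (auto simp: fin_sym_gen_set_def)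
  interpret G: group G by fact
  interpret H: group H by fact
  obtain ss where ss: "length ss = word_dist G S (fst p) (fst q)" "set ss \<subseteq> S"
    "fst p = fst q \<otimes>\<^bsub>G\<^esub> word_prod G ss"
    using word_dist_witness[OF assms(1)] assms(3,4) by (metis mem_Times_iff carrier_DirProd)
  obtain t ts where tts: "set (t # ts) \<subseteq> insert \<one>\<^bsub>G\<^esub> S" "word_prod G (t # ts) = word_prod G ss"
    "length (t # ts) = max (length ss) 1"
  proof (cases ss)
    case Nil then show thesis using that[of "\<one>\<^bsub>G\<^esub>" "[]"] by simp
  next
    case (Cons t ts) then show thesis using that[of t ts] ss(2) by auto
  qed
  define k where "k = inv\<^bsub>H\<^esub> snd q \<otimes>\<^bsub>H\<^esub> snd p"
  have k: "k \<in> carrier H" "snd p = snd q \<otimes>\<^bsub>H\<^esub> k"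
    using assms(3,4) by (auto simp: k_def H.m_assoc[symmetric])
  define L where "L = (t, k) # map (\<lambda>s. (s, \<one>\<^bsub>H\<^esub>)) ts"
  have "p = q \<otimes>\<^bsub>G \<times>\<times> H\<^esub> word_prod (G \<times>\<times> H) L"
    unfolding L_def word_prod_DirProd_lift[OF H.is_monoid k(1)] tts(2)
    using ss(3) k(2) by (simp add: mult_DirProd' prod_eq_iff)
  moreover have "set L \<subseteq> insert \<one>\<^bsub>G\<^esub> S \<times> carrier H" using tts(1) k(1) by (auto simp: L_def)
  ultimately have "word_dist (G \<times>\<times> H) (insert \<one>\<^bsub>G\<^esub> S \<times> carrier H) p q \<le> length L"
    by (rule word_dist_le[rotated])
  then show ?thesis using tts(3) ss(1) by (simp add: L_def)
qed

lemma word_ball_DirProd: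
  assumes "fin_sym_gen_set G S" "group H" "finite (carrier H)" "n \<ge> 1"
  shows "word_ball (G \<times>\<times> H) (insert \<one>\<^bsub>G\<^esub> S \<times> carrier H) n = word_ball G S n \<times> carrier H"
proof -
  have one: "\<one>\<^bsub>G \<times>\<times> H\<^esub> \<in> carrier (G \<times>\<times> H)"
    using assms(1,2) by (simp add: fin_sym_gen_set_def group.is_monoid monoid.one_closed)
  show ?thesis
    using word_dist_DirProd_ge[OF assms(1-3) one] word_dist_DirProd_le[OF assms(1,2) one] assms(4)
    by (fastforce simp: word_ball_def)
qed

lemma card_word_ball_DirProd:
  assumes "fin_sym_gen_set G S" "group H" "finite (carrier H)" "n \<ge> 1"
  shows "card (word_ball (G \<times>\<times> H) (insert \<one>\<^bsub>G\<^esub> S \<times> carrier H) n) = card (word_ball G S n) * card (carrier H)"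
  using word_ball_DirProd[OF assms] by (simp add: card_cartesian_product)

lemma poly_growth_scaled:
  assumes "poly_growth G S" "k > 0"
    and "\<forall>n\<ge>1. real (card (word_ball G' S' n)) = k * real (card (word_ball G S n))"
  shows "poly_growth G' S'"
proof -
  obtain C A :: real where CA: "C > 0" "A > 0"
    "\<forall>n::nat. n \<ge> 1 \<longrightarrow> real (card (word_ball G S n)) \<le> C * real n powr A"
    using assms(1) unfolding poly_growth_def by blast
  have "real (card (word_ball G' S' n)) \<le> (k * C) * real n powr A" if "n \<ge> 1" for n :: nat
    using CA(3) assms(2,3) that by (simp add: mult.assoc)
  then show ?thesis
    unfolding poly_growth_def using CA assms(2) by (intro exI[of _ "k * C"] exI[of _ A]) auto
qed

lemma homogeneous_dim_scaled:
  assumes "homogeneous_dim G S D" "k > 0"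
    and "\<forall>n\<ge>1. real (card (word_ball G' S' n)) = k * real (card (word_ball G S n))"
  shows "homogeneous_dim G' S' D"
proof -
  obtain C1 C2 :: real where C: "C1 > 0" "C2 > 0"
    "\<forall>n::nat. n \<ge> 1 \<longrightarrow> C1 * real n ^ D \<le> real (card (word_ball G S n)) \<and>
                         real (card (word_ball G S n)) \<le> C2 * real n ^ D"
    using assms(1) unfolding homogeneous_dim_def by blast
  have "(k * C1) * real n ^ D \<le> real (card (word_ball G' S' n)) \<and>
        real (card (word_ball G' S' n)) \<le> (k * C2) * real n ^ D" if "n \<ge> 1" for n :: nat
    using C(3) assms(2,3) that by (simp add: mult.assoc)
  then show ?thesis
    unfolding homogeneous_dim_def using C assms(2) by (intro exI[of _ "k * C1"] exI[of _ "k * C2"]) auto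
qed

lemma homogeneous_dim_scaled_iff:
  assumes "k > 0" "\<forall>n\<ge>1. real (card (word_ball G' S' n)) = k * real (card (word_ball G S n))"
  shows "homogeneous_dim G' S' D \<longleftrightarrow> homogeneous_dim G S D"
  using homogeneous_dim_scaled[OF _ assms] homogeneous_dim_scaled[of G' S' D "1 / k" G S] assms
  by auto

section \<open>Balls in graphs of bounded degree\<close>

definition graph_ball :: "'a set \<Rightarrow> ('a \<Rightarrow> 'a \<Rightarrow> bool) \<Rightarrow> 'a \<Rightarrow> nat \<Rightarrow> 'a set" where
  "graph_ball V E x r = {y \<in> V. graph_dist V E x y \<le> r}"

lemma graph_dist_le:
  "is_walk E p \<Longrightarrow> set p \<subseteq> V \<Longrightarrow> hd p = x \<Longrightarrow> last p = y \<Longrightarrow> length p = Suc n \<Longrightarrow> graph_dist V E x y \<le> n"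
  unfolding graph_dist_def by (rule Least_le) blast

lemma graph_dist_shortest_walk:
  assumes "conn_graph V E" "x \<in> V" "y \<in> V"
  obtains p where "is_walk E p" "set p \<subseteq> V" "hd p = x" "last p = y" "length p = Suc (graph_dist V E x y)"
proof -
  obtain p where "is_walk E p \<and> set p \<subseteq> V \<and> hd p = x \<and> last p = y"
    using assms unfolding conn_graph_def by blast
  moreover have "length p = Suc (length p - 1)" using calculation by (cases p) (auto simp: is_walk_def)
  ultimately have "\<exists>n p. is_walk E p \<and> set p \<subseteq> V \<and> hd p = x \<and> last p = y \<and> length p = Suc n" by blast
  then have "\<exists>p. is_walk E p \<and> set p \<subseteq> V \<and> hd p = x \<and> last p = y \<and> length p = Suc (graph_dist V E x y)"
    unfolding graph_dist_def by (rule LeastI_ex)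
  then show thesis using that by blast
qed

lemma graph_dist_self: "x \<in> V \<Longrightarrow> graph_dist V E x x = 0"
  using graph_dist_le[of E "[x]" V x x 0] by (simp add: is_walk_def)

lemma graph_dist_eq_0:
  assumes "conn_graph V E" "x \<in> V" "y \<in> V" "graph_dist V E x y = 0"
  shows "y = x"
proof -
  obtain p where "hd p = x" "last p = y" "length p = 1"
    using graph_dist_shortest_walk[OF assms(1-3)] assms(4) by auto
  then show ?thesis by (cases p) auto
qed

lemma graph_dist_Suc:
  assumes "conn_graph V E" "x \<in> V" "y \<in> V" "graph_dist V E x y = Suc n"
  obtains z where "E x z" "graph_dist V E z y \<le> n"
proof -
  obtain p where p: "is_walk E p" "set p \<subseteq> V" "hd p = x" "last p = y" "length p = Suc (Suc n)"
    using graph_dist_shortest_walk[OF assms(1-3)] assms(4) by metis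
  then obtain z rest where pe: "p = x # z # rest" by (metis length_Suc_conv list.sel(1))
  have "E x z" using p(1) pe unfolding is_walk_def by force
  moreover have "is_walk E (z # rest)" using p(1) pe unfolding is_walk_def
    by (auto simp del: nth_Cons_Suc)
  then have "graph_dist V E z y \<le> n" using p pe by (intro graph_dist_le) auto
  ultimately show thesis using that by blast
qed

lemma graph_ball_Suc_subset:
  assumes "conn_graph V E" "x \<in> V"
  shows "graph_ball V E x (Suc r) \<subseteq> insert x (\<Union>z\<in>{z. E x z}. graph_ball V E z r)"
proof
  fix y assume "y \<in> graph_ball V E x (Suc r)"
  then have y: "y \<in> V" "graph_dist V E x y \<le> Suc r" by (auto simp: graph_ball_def)
  show "y \<in> insert x (\<Union>z\<in>{z. E x z}. graph_ball V E z r)"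
  proof (cases "graph_dist V E x y")
    case 0
    then show ?thesis using graph_dist_eq_0[OF assms y(1)] by simp
  next
    case (Suc n)
    then obtain z where "E x z" "graph_dist V E z y \<le> n" using graph_dist_Suc[OF assms y(1)] by blast
    then show ?thesis using y Suc by (auto simp: graph_ball_def)
  qed
qed

lemma graph_ball_card_le:
  assumes "conn_graph V E" "\<forall>x\<in>V. card {y. E x y} \<le> \<Delta>" "x \<in> V"
  shows "finite (graph_ball V E x r) \<and> card (graph_ball V E x r) \<le> (\<Delta> + 1) ^ r"
  using assms(3)
proof (induction r arbitrary: x)
  case 0
  then have "graph_ball V E x 0 = {x}"
    using graph_dist_eq_0[OF assms(1)] graph_dist_self[of x V E] by (auto simp: graph_ball_def)
  then show ?case by simp
next
  case (Suc r)
  let ?N = "{z. E x z}"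
  have N: "finite ?N" "card ?N \<le> \<Delta>" "?N \<subseteq> V"
    using assms(1,2) Suc.prems unfolding conn_graph_def by auto
  then have IH: "finite (graph_ball V E z r)" "card (graph_ball V E z r) \<le> (\<Delta> + 1) ^ r" if "z \<in> ?N" for z
    using Suc.IH that by auto
  have fin: "finite (insert x (\<Union>z\<in>?N. graph_ball V E z r))" using N(1) IH(1) by auto
  have "card (graph_ball V E x (Suc r)) \<le> card (insert x (\<Union>z\<in>?N. graph_ball V E z r))"
    by (rule card_mono[OF fin graph_ball_Suc_subset[OF assms(1) Suc.prems]])
  also have "\<dots> \<le> Suc (card (\<Union>z\<in>?N. graph_ball V E z r))"
    using fin by (simp add: card_insert_if)
  also have "\<dots> \<le> Suc (\<Sum>z\<in>?N. card (graph_ball V E z r))"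
    using card_UN_le[OF N(1)] by simp
  also have "\<dots> \<le> Suc (card ?N * (\<Delta> + 1) ^ r)"
    using sum_bounded_above[of ?N "\<lambda>z. card (graph_ball V E z r)" "(\<Delta> + 1) ^ r"] IH(2) by simp
  also have "\<dots> \<le> Suc (\<Delta> * (\<Delta> + 1) ^ r)"
    using N(2) by simp
  also have "\<dots> \<le> (\<Delta> + 1) ^ Suc r"
    using one_le_power[of "\<Delta> + 1" r] by simp
  finally show ?case
    using finite_subset[OF graph_ball_Suc_subset[OF assms(1) Suc.prems] fin] by simp
qed

lemma rough_isometry_fibre_dist:
  assumes "rough_isometry X dX Y dY \<phi> a b" "\<forall>z\<in>Y. dY z z = 0" "x \<in> X" "y \<in> X" "\<phi> y = \<phi> x"
  shows "dX x y \<le> a * b"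
proof -
  have "dX x y / a - b \<le> 0" "a \<ge> 1" "\<phi> x \<in> Y"
    using assms unfolding rough_isometry_def by (metis image_subset_iff)+
  then show ?thesis by (simp add: divide_le_eq mult.commute)
qed

lemma rough_isometry_lift:
  assumes "rough_isometry X dX Y dY \<phi> a b" "c \<ge> 0"
    and "\<psi> ` X \<subseteq> Y'" "\<pi> ` Y' \<subseteq> Y" "\<forall>x\<in>X. \<pi> (\<psi> x) = \<phi> x"
    and "\<forall>p\<in>Y'. \<forall>q\<in>Y'. dY (\<pi> p) (\<pi> q) \<le> dY' p q \<and> dY' p q \<le> dY (\<pi> p) (\<pi> q) + c"
  shows "rough_isometry X dX Y' dY' \<psi> a (b + c)"
  unfolding rough_isometry_def
proof (intro conjI ballI)
  show "a \<ge> 1" "b + c \<ge> 0" "\<psi> ` X \<subseteq> Y'" using assms unfolding rough_isometry_def by auto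
next
  fix x y assume "x \<in> X" "y \<in> X"
  then show "dX x y / a - (b + c) \<le> dY' (\<psi> x) (\<psi> y)" "dY' (\<psi> x) (\<psi> y) \<le> a * dX x y + (b + c)"
    using assms unfolding rough_isometry_def by (smt (verit, best) image_subset_iff)+
next
  fix z assume "z \<in> Y'"
  then obtain x where "x \<in> X" "dY (\<pi> z) (\<phi> x) \<le> b"
    using assms(1,4) unfolding rough_isometry_def by blast
  then show "\<exists>x\<in>X. dY' z (\<psi> x) \<le> b + c"
    using assms(3,5,6) \<open>z \<in> Y'\<close> by (smt (verit, best) image_subset_iff)
qed

lemma rough_isometry_iso:
  assumes "fin_sym_gen_set G S" "group H" "h \<in> iso G H"
    and "rough_isometry X dX (carrier G) (\<lambda>x y. real (word_dist G S x y)) \<phi> a b"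
  shows "rough_isometry X dX (carrier H) (\<lambda>x y. real (word_dist H (h ` S) x y)) (h \<circ> \<phi>) a b"
proof -
  define h' where "h' = inv_into (carrier G) h"
  have onto: "h ` carrier G = carrier H" and inj: "inj_on h (carrier G)"
    using assms(3) unfolding iso_iff by blast+
  have h': "h' ` carrier H \<subseteq> carrier G" "\<forall>p\<in>carrier H. h (h' p) = p"
    using onto by (auto simp: h'_def inv_into_into f_inv_into_f)
  have "word_dist G S (h' p) (h' q) = word_dist H (h ` S) p q" if "p \<in> carrier H" "q \<in> carrier H" for p q
    using word_dist_iso[OF assms(1-3), of "h' p" "h' q"] h' that by (metis image_subset_iff)
  moreover have "\<phi> ` X \<subseteq> carrier G" using assms(4) by (simp add: rough_isometry_def)
  ultimately have "rough_isometry X dX (carrier H) (\<lambda>x y. real (word_dist H (h ` S) x y)) (h \<circ> \<phi>) a (b + 0)"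
    using assms(4) onto h'(1)
    by (intro rough_isometry_lift) (auto simp: h'_def inv_into_f_f[OF inj] image_subset_iff)
  then show ?thesis by simp
qed

lemma rough_isometry_graph_fibres_bounded:
  assumes "conn_graph V E" "bounded_geometry V E"
    and "rough_isometry V (\<lambda>x y. real (graph_dist V E x y)) Y dY \<phi> a b" "\<forall>z\<in>Y. dY z z = 0"
  obtains N where "\<forall>x\<in>V. finite {y \<in> V. \<phi> y = \<phi> x} \<and> card {y \<in> V. \<phi> y = \<phi> x} \<le> N"
proof -
  obtain \<Delta> where \<Delta>: "\<forall>x\<in>V. card {y. E x y} \<le> \<Delta>"
    using assms(2) unfolding bounded_geometry_def by blast
  have "{y \<in> V. \<phi> y = \<phi> x} \<subseteq> graph_ball V E x (nat \<lfloor>a * b\<rfloor>)" if "x \<in> V" for x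
    using rough_isometry_fibre_dist[OF assms(3,4) that] by (auto simp: graph_ball_def le_nat_floor)
  then show thesis
    using that[of "(\<Delta> + 1) ^ nat \<lfloor>a * b\<rfloor>"] graph_ball_card_le[OF assms(1) \<Delta>]
    by (meson card_mono finite_subset le_trans)
qed

lemma fibrewise_injective_colouring:
  assumes "finite A" "\<forall>x\<in>X. finite {y \<in> X. \<phi> y = \<phi> x} \<and> card {y \<in> X. \<phi> y = \<phi> x} \<le> card A"
  obtains c where "c ` X \<subseteq> A" "inj_on (\<lambda>x. (\<phi> x, c x)) X"
proof -
  define F where "F g = {y \<in> X. \<phi> y = g}" for g
  have "\<forall>g\<in>\<phi> ` X. \<exists>f. f ` F g \<subseteq> A \<and> inj_on f (F g)"
    using card_le_inj[OF _ assms(1)] assms(2) by (auto simp: F_def)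
  then obtain f where f: "\<And>x. x \<in> X \<Longrightarrow> f (\<phi> x) ` F (\<phi> x) \<subseteq> A \<and> inj_on (f (\<phi> x)) (F (\<phi> x))"
    by (metis bchoice imageI)
  show thesis
  proof
    show "(\<lambda>x. f (\<phi> x) x) ` X \<subseteq> A" using f by (fastforce simp: F_def)
    show "inj_on (\<lambda>x. (\<phi> x, f (\<phi> x) x)) X"
    proof (rule inj_onI)
      fix x y assume "x \<in> X" "y \<in> X" "(\<phi> x, f (\<phi> x) x) = (\<phi> y, f (\<phi> y) y)"
      then show "x = y" using f[of x] by (auto simp: F_def inj_on_def)
    qed
  qed
qed

lemma injective_rough_isometry_into_product:
  fixes \<phi> :: "'a \<Rightarrow> 'g"
  assumes "conn_graph V E" "bounded_geometry V E" "fin_sym_gen_set G S" "poly_growth G S"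
    and "rough_isometry V (\<lambda>x y. real (graph_dist V E x y))
           (carrier G) (\<lambda>x y. real (word_dist G S x y)) \<phi> a b"
  obtains G' :: "('g \<times> int) monoid" and S' \<phi>'
  where "fin_sym_gen_set G' S'" "poly_growth G' S'"
    "\<forall>D. homogeneous_dim G' S' D \<longleftrightarrow> homogeneous_dim G S D" "inj_on \<phi>' V"
    "rough_isometry V (\<lambda>x y. real (graph_dist V E x y))
       (carrier G') (\<lambda>x y. real (word_dist G' S' x y)) \<phi>' a (b + 1)"
proof -
  have "\<forall>z\<in>carrier G. real (word_dist G S z z) = 0"
    using assms(3) by (simp add: fin_sym_gen_set_def group.is_monoid word_dist_refl)
  then obtain N where N: "\<forall>x\<in>V. finite {y \<in> V. \<phi> y = \<phi> x} \<and> card {y \<in> V. \<phi> y = \<phi> x} \<le> N"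
    using rough_isometry_graph_fibres_bounded[OF assms(1,2,5)] by blast
  define H where "H = integer_mod_group (Suc N)"
  have H: "group H" "finite (carrier H)" "card (carrier H) = Suc N"
    by (simp_all add: H_def carrier_integer_mod_group)
  obtain c where c: "c ` V \<subseteq> carrier H" "inj_on (\<lambda>x. (\<phi> x, c x)) V"
  proof (rule fibrewise_injective_colouring[OF H(2)])
    show "\<forall>x\<in>V. finite {y \<in> V. \<phi> y = \<phi> x} \<and> card {y \<in> V. \<phi> y = \<phi> x} \<le> card (carrier H)"
      using N H(3) le_SucI by auto
  qed
  define S' where "S' = insert \<one>\<^bsub>G\<^esub> S \<times> carrier H"
  have fsg: "fin_sym_gen_set (G \<times>\<times> H) S'"
    unfolding S'_def using assms(3) H(1,2) by (rule fin_sym_gen_set_DirProd)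
  have balls: "\<forall>n\<ge>1. real (card (word_ball (G \<times>\<times> H) S' n)) = real (card (carrier H)) * real (card (word_ball G S n))"
    using card_word_ball_DirProd[OF assms(3) H(1,2)] by (simp add: S'_def)
  have "real (word_dist G S (fst p) (fst q)) \<le> real (word_dist (G \<times>\<times> H) S' p q) \<and>
        real (word_dist (G \<times>\<times> H) S' p q) \<le> real (word_dist G S (fst p) (fst q)) + 1"
    if "p \<in> carrier (G \<times>\<times> H)" "q \<in> carrier (G \<times>\<times> H)" for p q
    using word_dist_DirProd_ge[OF assms(3) H(1,2) that] word_dist_DirProd_le[OF assms(3) H(1) that]
    by (simp add: S'_def)
  then have "rough_isometry V (\<lambda>x y. real (graph_dist V E x y))
      (carrier (G \<times>\<times> H)) (\<lambda>x y. real (word_dist (G \<times>\<times> H) S' x y)) (\<lambda>x. (\<phi> x, c x)) a (b + 1)"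
    using c(1) assms(5) unfolding rough_isometry_def[of V _ "carrier G"]
    by (intro rough_isometry_lift[OF assms(5), where \<pi> = fst]) auto
  then show thesis
    using that[OF fsg poly_growth_scaled[OF assms(4) _ balls] _ c(2)] homogeneous_dim_scaled_iff[OF _ balls] H(3)
    by simp
qed

theorem lemma4p1:
  fixes V :: "'a set" and E :: "'a \<Rightarrow> 'a \<Rightarrow> bool"
    and G :: "('g, 'm) monoid_scheme" and S :: "'g set" and \<phi> :: "'a \<Rightarrow> 'g"
  assumes "conn_graph V E" and "bounded_geometry V E"
    and "fin_sym_gen_set G S" and "poly_growth G S"
    and "is_rough_isometry V (\<lambda>x y. real (graph_dist V E x y))
                            (carrier G) (\<lambda>x y. real (word_dist G S x y)) \<phi>"
  shows "\<exists>(G' :: nat monoid) S' (\<phi>' :: 'a \<Rightarrow> nat).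
           fin_sym_gen_set G' S' \<and> poly_growth G' S' \<and>
           (\<forall>D. homogeneous_dim G' S' D \<longleftrightarrow> homogeneous_dim G S D) \<and>
           inj_on \<phi>' V \<and>
           is_rough_isometry V (\<lambda>x y. real (graph_dist V E x y))
                             (carrier G') (\<lambda>x y. real (word_dist G' S' x y)) \<phi>'"
proof -
  obtain a b where "rough_isometry V (\<lambda>x y. real (graph_dist V E x y))
      (carrier G) (\<lambda>x y. real (word_dist G S x y)) \<phi> a b"
    using assms(5) unfolding is_rough_isometry_def by blast
  then obtain P :: "('g \<times> int) monoid" and SP \<psi>
    where P: "fin_sym_gen_set P SP" "poly_growth P SP" "\<forall>D. homogeneous_dim P SP D \<longleftrightarrow> homogeneous_dim G S D"
      "inj_on \<psi> V" "rough_isometry V (\<lambda>x y. real (graph_dist V E x y))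
         (carrier P) (\<lambda>x y. real (word_dist P SP x y)) \<psi> a (b + 1)"
    using injective_rough_isometry_into_product[OF assms(1-4)] by metis
  obtain Q :: "nat monoid" and h where Q: "group Q" "h \<in> iso P Q"
    using exists_nat_iso_copy[OF P(1)] by blast
  have balls: "\<forall>n\<ge>1. real (card (word_ball Q (h ` SP) n)) = 1 * real (card (word_ball P SP n))"
    using card_word_ball_iso[OF P(1) Q] by simp
  have "inj_on (h \<circ> \<psi>) V"
    using P(4,5) Q(2) by (intro comp_inj_on) (auto simp: iso_iff rough_isometry_def intro: inj_on_subset)
  then show ?thesis
    using fin_sym_gen_set_iso[OF P(1) Q] poly_growth_scaled[OF P(2) _ balls]
      homogeneous_dim_scaled_iff[OF _ balls] P(3) rough_isometry_iso[OF P(1) Q P(5)]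
    unfolding is_rough_isometry_def
    by (intro exI[of _ Q] exI[of _ "h ` SP"] exI[of _ "h \<circ> \<psi>"] conjI exI[of _ a] exI[of _ "b + 1"]) simp_all
qed

end
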